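(* Let $\omega$ be a Schwarz-type function, $F=\ell\circ\omega$, and let $\varphi(z)=\lambda z$ with $|\lambda|=1$, and suppose $T_{F,\varphi}(f)\in\mathcal{P}$ for every $f\in\mathcal{P}$. Then the set of fixed points of $T_{F,\varphi}$ in $\mathcal{P}$ is: (a) all of $\mathcal{P}$ if $\lambda=1$; (b) the set of functions $f(z)=g(z^n)$ with $g\in\mathcal{P}$, if $\lambda^n=1$ with $n>1$ the smallest positive integer such that $\lambda^n=1$; (c) only the constant function $1$, if $\lambda^n\ne1$ for all positive integers $n$.
   Context: $\mathbb{D}$ is the open unit disk. $\mathcal{P}$ is the set of analytic $f$ on $\mathbb{D}$ with $\mathrm{Re}\,f>0$ and $f(0)=1$. A Schwarz-type function is an analytic $\omega:\mathbb{D}\to\mathbb{D}$ with $\omega(0)=0$. $\ell(z)=\frac{1+z}{1-z}$. $T_{F,\varphi}(f)=F\cdot(f\circ\varphi)$. *)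

theory Defs
  imports "HOL-Complex_Analysis.Complex_Analysis"
begin

definition unit_disk :: "complex set" where
  "unit_disk = ball 0 1"

definition carP :: "(complex \<Rightarrow> complex) set" where
  "carP = {f. f holomorphic_on unit_disk \<and> (\<forall>z\<in>unit_disk. Re (f z) > 0) \<and> f 0 = 1}"

definition schwarz_type :: "(complex \<Rightarrow> complex) \<Rightarrow> bool" where
  "schwarz_type w \<longleftrightarrow> w holomorphic_on unit_disk \<and> w ` unit_disk \<subseteq> unit_disk \<and> w 0 = 0"

definition ell :: "complex \<Rightarrow> complex" where
  "ell z = (1 + z) / (1 - z)"

definition wco :: "(complex \<Rightarrow> complex) \<Rightarrow> (complex \<Rightarrow> complex) \<Rightarrow> (complex \<Rightarrow> complex) \<Rightarrow> (complex \<Rightarrow> complex)" where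
  "wco F \<phi> f = (\<lambda>z. F z * f (\<phi> z))"

definition fixed_points_P :: "(complex \<Rightarrow> complex) \<Rightarrow> (complex \<Rightarrow> complex) \<Rightarrow> (complex \<Rightarrow> complex) set" where
  "fixed_points_P F \<phi> = {f \<in> carP. \<forall>z\<in>unit_disk. wco F \<phi> f z = f z}"

end

theory Submission
  imports Defs
begin

text \<open>
  Since the constant \<open>1\<close> lies in \<open>\<P>\<close>, the weight \<open>F = T 1\<close> is itself in \<open>\<P>\<close>; this is
  all that is used about \<open>F\<close>.
  Testing \<open>T\<close> on \<open>ell (c z)\<close> with \<open>|c| \<le> 1\<close> gives \<open>Re (F z ell (u)) > 0\<close> whenever \<open>|u| \<le> |z|\<close>, and
  \<open>ell (i tan (b/2)) = e\<^sup>i\<^sup>b\<close>, so \<open>|arg F z| \<le> \<pi>/2 - b\<close> once \<open>|z| \<ge> tan (b/2)\<close>. By the maximum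
  principle for the harmonic function \<open>arg F\<close> the bound holds on the whole disk, for every
  \<open>b < \<pi>/2\<close>; hence \<open>F\<close> is real, thus constant by the open mapping theorem, and \<open>F = 1\<close>.
  The fixed points are then the \<open>f \<in> \<P>\<close> with \<open>f(\<lambda>z) = f(z)\<close>, and comparing Taylor
  coefficients, \<open>\<lambda>\<^sup>k a\<^sub>k = a\<^sub>k\<close>, leaves exactly the powers \<open>z\<^sup>k\<close> with \<open>\<lambda>\<^sup>k = 1\<close>.
\<close>

lemma Re_ell_pos:
  assumes "cmod u < 1" shows "Re (ell u) > 0"
proof -
  have "1 - u \<noteq> 0" using assms by auto
  then have "(1 - Re u)^2 + (Im u)^2 > 0"
    by (auto simp: complex_eq_iff sum_power2_gt_zero_iff)
  moreover have "(Re u)^2 + (Im u)^2 < 1"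
    using power_strict_mono[OF assms, of 2] by (simp add: cmod_power2)
  moreover have "Re (ell u) = (1 - (Re u)^2 - (Im u)^2) / ((1 - Re u)^2 + (Im u)^2)"
    unfolding ell_def Re_divide by (simp add: algebra_simps power2_eq_square)
  ultimately show ?thesis by simp
qed

lemma const_one_in_carP: "(\<lambda>_. 1) \<in> carP"
  by (simp add: carP_def)

lemma ell_scaled_in_carP:
  assumes "cmod c \<le> 1" shows "(\<lambda>z. ell (c * z)) \<in> carP"
proof -
  have inside: "cmod (c * z) < 1" if "z \<in> unit_disk" for z
    using that assms mult_right_mono[OF assms, of "cmod z"]
    by (simp add: unit_disk_def norm_mult)
  have "(\<lambda>z. ell (c * z)) holomorphic_on unit_disk"
    unfolding ell_def by (intro holomorphic_intros) (use inside in force)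
  then show ?thesis
    using inside Re_ell_pos by (simp add: carP_def ell_def)
qed

lemma ell_i_tan_half:
  assumes "\<bar>b\<bar> < pi" shows "ell (\<i> * of_real (tan (b/2))) = cis b"
proof -
  have cos_pos: "cos (b/2) > 0" using assms by (intro cos_gt_zero_pi) auto
  have "1 + \<i> * of_real (tan (b/2)) = cis (b/2) / of_real (cos (b/2))"
    and "1 - \<i> * of_real (tan (b/2)) = cis (-(b/2)) / of_real (cos (b/2))"
    using cos_pos by (simp_all add: complex_eq_iff tan_def)
  then have "ell (\<i> * of_real (tan (b/2)))
      = (cis (b/2) / of_real (cos (b/2))) / (cis (-(b/2)) / of_real (cos (b/2)))"
    by (simp only: ell_def)
  also have "\<dots> = cis (b/2) / cis (-(b/2))"
    using cos_pos by (simp add: divide_simps)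
  also have "\<dots> = cis b" by (simp add: cis_divide)
  finally show ?thesis .
qed

lemma abs_Im_Ln_le_if_rotations_Re_pos:
  assumes "Re a > 0" "0 \<le> b" "b \<le> pi/2" "Re (a * cis b) > 0" "Re (a * cis (-b)) > 0"
  shows "\<bar>Im (Ln a)\<bar> \<le> pi/2 - b"
proof -
  define t where "t = Im (Ln a)"
  have t: "\<bar>t\<bar> < pi/2" using Re_Ln_pos_lt_imp assms(1) t_def by blast
  have a0: "a \<noteq> 0" using assms(1) by auto
  have rotate: "Re (a * cis s) = exp (Re (Ln a)) * cos (t + s)" for s
  proof -
    have "a * cis s = exp (Ln a + \<i> * of_real s)"
      using a0 by (simp add: exp_add cis_conv_exp)
    then show ?thesis by (simp add: Re_exp t_def)
  qed
  have "cos (t + b) > 0" "cos (t - b) > 0"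
    using assms(4,5) unfolding rotate by (simp_all add: zero_less_mult_iff)
  then have pos: "cos (t + b) > 0" "cos (b - t) > 0"
    by (simp_all add: cos_diff mult.commute)
  have nonpos: "cos x \<le> 0" if "pi/2 \<le> x" "x \<le> pi" for x
    using cos_monotone_0_pi_le[of "pi/2" x] that by simp
  have "\<not> pi/2 \<le> t + b" using nonpos[of "t + b"] pos(1) t assms(3) by linarith
  moreover have "\<not> pi/2 \<le> b - t" using nonpos[of "b - t"] pos(2) t assms(3) by linarith
  ultimately show ?thesis unfolding t_def by linarith
qed

lemma holomorphic_real_valued_constant_on:
  assumes holf: "f holomorphic_on S" and "open S" "connected S"
    and real: "\<And>z. z \<in> S \<Longrightarrow> Im (f z) = 0"
  shows "f constant_on S"
proof (rule ccontr)
  assume nonconst: "\<not> f constant_on S"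
  then have "open (f ` S)"
    using open_mapping_thm[OF holf assms(2,3) assms(2) order_refl] by blast
  moreover obtain z where "z \<in> S" using nonconst by (auto simp: constant_on_def)
  ultimately obtain e where "e > 0" "ball (f z) e \<subseteq> f ` S"
    using open_contains_ball by blast
  moreover have "f z + \<i> * of_real (e/2) \<in> ball (f z) e"
    using \<open>e > 0\<close> by (simp add: dist_norm norm_mult)
  ultimately obtain y where "y \<in> S" "f y = f z + \<i> * of_real (e/2)"
    by (auto simp del: of_real_divide)
  then show False
    using real[OF \<open>y \<in> S\<close>] real[OF \<open>z \<in> S\<close>] \<open>e > 0\<close> by simp
qed

lemma unit_disk_rotation: "cmod lam = 1 \<Longrightarrow> z \<in> unit_disk \<Longrightarrow> lam * z \<in> unit_disk"
  by (simp add: unit_disk_def norm_mult)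

context
  fixes F :: "complex \<Rightarrow> complex" and lam :: complex
  assumes lam_norm: "cmod lam = 1"
    and preserves_carP: "\<forall>f\<in>carP. wco F (\<lambda>z. lam * z) f \<in> carP"
begin

lemma weight_in_carP: "F \<in> carP"
proof -
  have "wco F (\<lambda>z. lam * z) (\<lambda>_. 1) \<in> carP"
    using preserves_carP const_one_in_carP by blast
  then show ?thesis by (simp add: wco_def)
qed

lemma Re_weight_mult_ell_pos:
  assumes z: "z \<in> unit_disk" and u: "cmod u \<le> cmod z"
  shows "Re (F z * ell u) > 0"
proof -
  define c where "c = (if z = 0 then 0 else u / (lam * z))"
  have "cmod c \<le> 1"
    using u lam_norm by (auto simp: c_def norm_divide norm_mult divide_le_eq)
  then have "wco F (\<lambda>z. lam * z) (\<lambda>z. ell (c * z)) \<in> carP"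
    using preserves_carP ell_scaled_in_carP by blast
  then have "Re (F z * ell (c * (lam * z))) > 0"
    using z by (auto simp: carP_def wco_def)
  moreover have "c * (lam * z) = u"
    using u lam_norm by (auto simp: c_def)
  ultimately show ?thesis by simp
qed

lemma abs_Im_Ln_weight_le_outside:
  assumes z: "z \<in> unit_disk" and b: "0 \<le> b" "b < pi/2" and outside: "tan (b/2) \<le> cmod z"
  shows "\<bar>Im (Ln (F z))\<bar> \<le> pi/2 - b"
proof (rule abs_Im_Ln_le_if_rotations_Re_pos)
  show "Re (F z) > 0" using weight_in_carP z by (simp add: carP_def)
  have "0 \<le> tan (b/2)" using b by (intro tan_pos_pi2_le) auto
  have rotation_pos: "Re (F z * cis s) > 0" if "\<bar>s\<bar> = b" for s
  proof -
    have "\<bar>tan (s/2)\<bar> = tan (b/2)"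
      using that \<open>0 \<le> tan (b/2)\<close> by (cases "s \<ge> 0") (auto simp: tan_minus)
    then have "Re (F z * ell (\<i> * of_real (tan (s/2)))) > 0"
      using outside by (intro Re_weight_mult_ell_pos z) (simp add: norm_mult)
    then show ?thesis using that b by (simp add: ell_i_tan_half)
  qed
  show "Re (F z * cis b) > 0" "Re (F z * cis (-b)) > 0"
    using b by (intro rotation_pos; simp)+
qed (use b in auto)

lemma abs_Im_Ln_weight_le:
  assumes z0: "z0 \<in> unit_disk" and b: "0 \<le> b" "b < pi/2"
  shows "\<bar>Im (Ln (F z0))\<bar> \<le> pi/2 - b"
proof -
  define r where "r = max (max (cmod z0) (tan (b/2))) (1/2)"
  have "tan (b/2) < tan (pi/4)" using b by (intro tan_monotone) auto
  then have "r < 1" using z0 by (auto simp: r_def unit_disk_def tan_45)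
  then have disk: "cball 0 r \<subseteq> unit_disk" by (auto simp: unit_disk_def)
  have hol_Ln: "(\<lambda>z. Ln (F z)) holomorphic_on unit_disk"
    using weight_in_carP
    by (intro holomorphic_on_Ln') (auto simp: carP_def complex_nonpos_Reals_iff)
  have "s * Im (Ln (F z0)) \<le> pi/2 - b" if s: "s = 1 \<or> s = -1" for s
  proof -
    define h where "h z = exp (- (of_real s * \<i>) * Ln (F z))" for z
    have norm_h: "norm (h z) = exp (s * Im (Ln (F z)))" for z
      by (simp add: h_def norm_exp_eq_Re)
    have hol_h: "h holomorphic_on unit_disk"
      unfolding h_def by (intro holomorphic_intros hol_Ln)
    have "norm (h z0) \<le> exp (pi/2 - b)"
    proof (rule maximum_modulus_frontier[where S = "cball 0 r" and f = h])
      show "h holomorphic_on interior (cball 0 r)"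
        using hol_h disk ball_subset_cball
        by (metis holomorphic_on_subset interior_cball order_trans)
      show "continuous_on (closure (cball 0 r)) h"
        using hol_h disk by (auto intro: holomorphic_on_imp_continuous_on holomorphic_on_subset)
      show "z0 \<in> cball 0 r" by (simp add: r_def)
      fix z :: complex assume "z \<in> frontier (cball 0 r)"
      then have "z \<in> unit_disk" "tan (b/2) \<le> cmod z"
        using \<open>r < 1\<close> by (auto simp: unit_disk_def r_def)
      then have "\<bar>Im (Ln (F z))\<bar> \<le> pi/2 - b"
        using abs_Im_Ln_weight_le_outside b by blast
      then show "norm (h z) \<le> exp (pi/2 - b)" using s by (auto simp: norm_h)
    qed simp
    then show ?thesis by (simp add: norm_h)
  qed
  from this[of 1] this[of "-1"] show ?thesis by linarith
qed

lemma Im_weight_eq_0: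
  assumes z: "z \<in> unit_disk" shows "Im (F z) = 0"
proof -
  have Re_pos: "Re (F z) > 0" using weight_in_carP z by (simp add: carP_def)
  have "\<bar>Im (Ln (F z))\<bar> \<le> 0 + e" if "e > 0" for e
  proof (cases "e < pi/2")
    case True
    then show ?thesis using abs_Im_Ln_weight_le[OF z, of "pi/2 - e"] \<open>e > 0\<close> by simp
  next
    case False
    then show ?thesis using Re_Ln_pos_lt_imp[OF Re_pos] by simp
  qed
  then have "Im (Ln (F z)) = 0" by (meson abs_le_zero_iff field_le_epsilon)
  moreover have "F z \<noteq> 0" using Re_pos by auto
  ultimately show ?thesis using Im_Ln_eq_0 by blast
qed

lemma weight_eq_1:
  assumes z: "z \<in> unit_disk" shows "F z = 1"
proof -
  have "F constant_on unit_disk"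
    using weight_in_carP Im_weight_eq_0
    by (intro holomorphic_real_valued_constant_on) (auto simp: carP_def unit_disk_def)
  moreover have "0 \<in> unit_disk" "F 0 = 1"
    using weight_in_carP by (auto simp: carP_def unit_disk_def)
  ultimately show ?thesis using z by (metis constant_on_def)
qed

lemma fixed_points_P_rotation:
  "fixed_points_P F (\<lambda>z. lam * z) = {f \<in> carP. \<forall>z\<in>unit_disk. f (lam * z) = f z}"
  using weight_eq_1 by (auto simp: fixed_points_P_def wco_def)

end

definition taylor_coeff :: "(complex \<Rightarrow> complex) \<Rightarrow> nat \<Rightarrow> complex" where
  "taylor_coeff f k = (deriv ^^ k) f 0 / fact k"

lemma taylor_coeff_sums:
  assumes "f holomorphic_on unit_disk" "z \<in> unit_disk"
  shows "(\<lambda>k. taylor_coeff f k * z ^ k) sums f z"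
  using holomorphic_power_series[of f 0 1 z] assms
  by (simp add: unit_disk_def taylor_coeff_def)

lemma taylor_coeff_rotation_invariant:
  assumes hol: "f holomorphic_on unit_disk" and lam: "cmod lam = 1"
    and inv: "\<forall>z\<in>unit_disk. f (lam * z) = f z" and "lam ^ k \<noteq> 1"
  shows "taylor_coeff f k = 0"
proof -
  have disk: "open unit_disk" "0 \<in> unit_disk" by (auto simp: unit_disk_def)
  have "(deriv ^^ k) f 0 = (deriv ^^ k) (\<lambda>z. f (lam * z)) 0"
    using eventually_nhds_in_open[OF disk] inv
    by (intro higher_deriv_cong_ev) (auto elim!: eventually_mono)
  also have "\<dots> = lam ^ k * (deriv ^^ k) f 0"
    using higher_deriv_compose_linear[OF hol disk(1) disk unit_disk_rotation[OF lam]] by simp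
  finally show ?thesis using \<open>lam ^ k \<noteq> 1\<close> by (simp add: taylor_coeff_def)
qed

lemma rotation_invariant_eq_const:
  assumes hol: "f holomorphic_on unit_disk" and lam: "cmod lam = 1"
    and inv: "\<forall>z\<in>unit_disk. f (lam * z) = f z"
    and not_root: "\<forall>k>0. lam ^ k \<noteq> 1" and z: "z \<in> unit_disk"
  shows "f z = f 0"
proof -
  have "taylor_coeff f k * z ^ k = (if k = 0 then f 0 else 0)" for k
    using taylor_coeff_rotation_invariant[OF hol lam inv] not_root
    by (simp add: taylor_coeff_def)
  then have "(\<lambda>k. taylor_coeff f k * z ^ k) sums f 0"
    using sums_single[of 0 "\<lambda>_. f 0"] by simp
  then show ?thesis using taylor_coeff_sums[OF hol z] sums_unique2 by blast
qed

lemma power_image_unit_disk: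
  assumes "n > 0" shows "(\<lambda>z. z ^ n) ` unit_disk = unit_disk"
proof
  show "(\<lambda>z. z ^ n) ` unit_disk \<subseteq> unit_disk"
    using assms by (auto simp: unit_disk_def norm_power power_less_one_iff)
  show "unit_disk \<subseteq> (\<lambda>z. z ^ n) ` unit_disk"
  proof
    fix w assume w: "w \<in> unit_disk"
    define z where "z = (if w = 0 then 0 else exp (Ln w / of_nat n))"
    have "z ^ n = w"
      using assms by (simp add: z_def flip: exp_of_nat_mult)
    moreover have "cmod z < 1"
    proof (rule power_less_imp_less_base)
      show "cmod z ^ n < 1 ^ n"
        using w \<open>z ^ n = w\<close> by (auto simp: unit_disk_def simp flip: norm_power)
    qed simp
    ultimately show "w \<in> (\<lambda>z. z ^ n) ` unit_disk"
      by (auto simp: unit_disk_def)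
  qed
qed

lemma rotation_invariant_power_factor:
  assumes hol: "f holomorphic_on unit_disk" and lam: "cmod lam = 1"
    and inv: "\<forall>z\<in>unit_disk. f (lam * z) = f z"
    and "n > 0" and roots: "\<forall>k. lam ^ k = 1 \<longrightarrow> n dvd k"
  obtains g where "g holomorphic_on unit_disk" "\<forall>z\<in>unit_disk. f z = g (z ^ n)"
proof -
  define a where "a k = taylor_coeff f (n * k)" for k
  have "strict_mono (\<lambda>k. n * k)" using \<open>n > 0\<close> by (simp add: strict_mono_def)
  moreover have "taylor_coeff f k = 0" if "k \<notin> range (\<lambda>k. n * k)" for k
    using that roots taylor_coeff_rotation_invariant[OF hol lam inv] by (auto simp: dvd_def)
  ultimately have sums_f: "(\<lambda>k. a k * (z ^ n) ^ k) sums f z" if "z \<in> unit_disk" for z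
    using taylor_coeff_sums[OF hol that]
    by (subst (asm) sums_mono_reindex [symmetric]) (auto simp: a_def power_mult)
  define g where "g w = (\<Sum>k. a k * w ^ k)" for w
  have sums_g: "(\<lambda>k. a k * w ^ k) sums g w" if "w \<in> unit_disk" for w
  proof -
    have "w \<in> (\<lambda>z. z ^ n) ` unit_disk"
      using that by (simp add: power_image_unit_disk[OF \<open>n > 0\<close>])
    then obtain z where "z \<in> unit_disk" "w = z ^ n" by blast
    then have "(\<lambda>k. a k * w ^ k) sums f z" using sums_f by simp
    then show ?thesis unfolding g_def by (rule summable_sums[OF sums_summable])
  qed
  have "g holomorphic_on unit_disk"
    using sums_g unfolding unit_disk_def by (intro power_series_holomorphic) simp
  moreover have "f z = g (z ^ n)" if "z \<in> unit_disk" for z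
  proof -
    have "z ^ n \<in> unit_disk"
      using imageI[OF that, of "\<lambda>z. z ^ n"] by (simp add: power_image_unit_disk[OF \<open>n > 0\<close>])
    then show ?thesis using sums_unique2[OF sums_f[OF that] sums_g] by blast
  qed
  ultimately show ?thesis using that by blast
qed

lemma primitive_root_power_eq_1_imp_dvd:
  fixes lam :: "'a :: monoid_mult"
  assumes "n > 0" "lam ^ n = 1" "\<forall>m. 0 < m \<and> m < n \<longrightarrow> lam ^ m \<noteq> 1" "lam ^ k = 1"
  shows "n dvd k"
proof -
  have "lam ^ k = (lam ^ n) ^ (k div n) * lam ^ (k mod n)"
    by (simp flip: power_mult power_add)
  then have "lam ^ (k mod n) = 1" using assms(2,4) by simp
  then show ?thesis using assms(1,3) by (meson mod_less_divisor mod_0_imp_dvd neq0_conv)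
qed

lemma carP_rotation_invariant_iff_power_factor:
  assumes lam: "cmod lam = 1" and "n > 0" "lam ^ n = 1"
    and roots: "\<forall>k. lam ^ k = 1 \<longrightarrow> n dvd k" and f: "f \<in> carP"
  shows "(\<forall>z\<in>unit_disk. f (lam * z) = f z) \<longleftrightarrow> (\<exists>g\<in>carP. \<forall>z\<in>unit_disk. f z = g (z ^ n))"
proof
  assume inv: "\<forall>z\<in>unit_disk. f (lam * z) = f z"
  obtain g where hol: "g holomorphic_on unit_disk" and g: "\<forall>z\<in>unit_disk. f z = g (z ^ n)"
    using rotation_invariant_power_factor[OF _ lam inv \<open>n > 0\<close> roots] f
    by (auto simp: carP_def)
  have "Re (g w) > 0" if "w \<in> unit_disk" for w
  proof -
    from that obtain z where "z \<in> unit_disk" "w = z ^ n"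
      using power_image_unit_disk[OF \<open>n > 0\<close>] by (metis imageE)
    then show ?thesis using f g by (auto simp: carP_def)
  qed
  moreover have "g 0 = 1"
    using f g \<open>n > 0\<close> by (auto simp: carP_def unit_disk_def zero_power)
  ultimately show "\<exists>g\<in>carP. \<forall>z\<in>unit_disk. f z = g (z ^ n)"
    using hol g by (auto simp: carP_def)
next
  assume "\<exists>g\<in>carP. \<forall>z\<in>unit_disk. f z = g (z ^ n)"
  then obtain g where g: "\<forall>z\<in>unit_disk. f z = g (z ^ n)" by blast
  show "\<forall>z\<in>unit_disk. f (lam * z) = f z"
    using g unit_disk_rotation[OF lam] \<open>lam ^ n = 1\<close> by (simp add: power_mult_distrib)
qed

lemma carP_rotation_invariant_iff_one:
  assumes lam: "cmod lam = 1" and not_root: "\<forall>k>0. lam ^ k \<noteq> 1" and f: "f \<in> carP"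
  shows "(\<forall>z\<in>unit_disk. f (lam * z) = f z) \<longleftrightarrow> (\<forall>z\<in>unit_disk. f z = 1)"
proof (intro iffI ballI)
  fix z assume inv: "\<forall>z\<in>unit_disk. f (lam * z) = f z" and "z \<in> unit_disk"
  have hol: "f holomorphic_on unit_disk" using f by (simp add: carP_def)
  show "f z = 1"
    using rotation_invariant_eq_const[OF hol lam inv not_root \<open>z \<in> unit_disk\<close>] f
    by (simp add: carP_def)
qed (use unit_disk_rotation[OF lam] in auto)

theorem proposition4p2:
  fixes w :: "complex \<Rightarrow> complex" and lam :: complex
  assumes "schwarz_type w"
    and "cmod lam = 1"
    and "\<forall>f\<in>carP. wco (ell \<circ> w) (\<lambda>z. lam * z) f \<in> carP"
  shows "(lam = 1 \<longrightarrow> fixed_points_P (ell \<circ> w) (\<lambda>z. lam * z) = carP)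
    \<and> (\<forall>n::nat. n > 1 \<and> lam ^ n = 1 \<and> (\<forall>m::nat. 0 < m \<and> m < n \<longrightarrow> lam ^ m \<noteq> 1) \<longrightarrow>
         fixed_points_P (ell \<circ> w) (\<lambda>z. lam * z) =
           {f \<in> carP. \<exists>g\<in>carP. \<forall>z\<in>unit_disk. f z = g (z ^ n)})
    \<and> ((\<forall>n::nat. n > 0 \<longrightarrow> lam ^ n \<noteq> 1) \<longrightarrow>
         fixed_points_P (ell \<circ> w) (\<lambda>z. lam * z) = {f \<in> carP. \<forall>z\<in>unit_disk. f z = 1})"
proof -
  have fixed: "fixed_points_P (ell \<circ> w) (\<lambda>z. lam * z)
      = {f \<in> carP. \<forall>z\<in>unit_disk. f (lam * z) = f z}"
    using fixed_points_P_rotation[OF assms(2,3)] .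
  have "fixed_points_P (ell \<circ> w) (\<lambda>z. lam * z)
      = {f \<in> carP. \<exists>g\<in>carP. \<forall>z\<in>unit_disk. f z = g (z ^ n)}"
    if "n > 1" "lam ^ n = 1" "\<forall>m. 0 < m \<and> m < n \<longrightarrow> lam ^ m \<noteq> 1" for n :: nat
  proof -
    have "n > 0" using that by simp
    then have "\<forall>k. lam ^ k = 1 \<longrightarrow> n dvd k"
      using that primitive_root_power_eq_1_imp_dvd[of n lam] by auto
    then show ?thesis
      unfolding fixed
      using carP_rotation_invariant_iff_power_factor[OF assms(2) \<open>n > 0\<close> \<open>lam ^ n = 1\<close>]
      by blast
  qed
  moreover have "fixed_points_P (ell \<circ> w) (\<lambda>z. lam * z) = {f \<in> carP. \<forall>z\<in>unit_disk. f z = 1}"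
    if "\<forall>n>0. lam ^ n \<noteq> 1"
    unfolding fixed using carP_rotation_invariant_iff_one[OF assms(2) that] by blast
  ultimately show ?thesis unfolding fixed by auto
qed

end
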